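(* For all $n,d\in\mathbb N$, $$\mathbf c_n(\ell_\infty^d(\mathbb C))\ge\frac12\sqrt{\frac{d^n}{(24n)^d}}.$$
   Context: For a complex Banach space $X$ and $n\in\mathbb N$, $\mathbf c_n(X)$ is the smallest constant such that for all $\psi_1,\dots,\psi_n\in X^*$, $\|\psi_1\|\cdots\|\psi_n\|\le \mathbf c_n(X)\,\|\psi_1\cdots\psi_n\|$, where $\psi_1\cdots\psi_n$ is the pointwise product and $\|P\|=\sup_{\|x\|=1}|P(x)|$. $\ell_\infty^d(\mathbb C)$ is $\mathbb C^d$ with the sup norm. *)

theory Defs
  imports "HOL-Analysis.Analysis"
begin

text \<open>The space ell_infinity^d(C): vectors are functions from a finite index type 'd
  (with d = CARD('d)) to the complex numbers, equipped with the sup norm.\<close>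

definition supnorm :: "('d::finite \<Rightarrow> complex) \<Rightarrow> real" where
  "supnorm x = Max (range (\<lambda>i. cmod (x i)))"

text \<open>Elements of the dual: complex-linear functionals on C^d (automatically bounded,
  since the space is finite-dimensional).\<close>

definition clinear_functional :: "(('d::finite \<Rightarrow> complex) \<Rightarrow> complex) \<Rightarrow> bool" where
  "clinear_functional \<psi> \<longleftrightarrow>
     (\<forall>x y. \<psi> (\<lambda>i. x i + y i) = \<psi> x + \<psi> y) \<and> (\<forall>c x. \<psi> (\<lambda>i. c * x i) = c * \<psi> x)"

definition polynorm :: "(('d::finite \<Rightarrow> complex) \<Rightarrow> complex) \<Rightarrow> real" where
  "polynorm P = Sup {cmod (P x) | x. supnorm x = 1}"

definition cn_linf :: "'d::finite itself \<Rightarrow> nat \<Rightarrow> real" where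
  "cn_linf _ n = Inf {C. \<forall>\<psi> :: nat \<Rightarrow> ('d \<Rightarrow> complex) \<Rightarrow> complex.
        (\<forall>i<n. clinear_functional (\<psi> i)) \<longrightarrow>
        (\<Prod>i<n. polynorm (\<psi> i)) \<le> C * polynorm (\<lambda>x. \<Prod>i<n. \<psi> i x)}"

end

theory Submission
  imports Defs
begin

text \<open>For \<open>J \<subseteq> {1..d}\<close> and an injection \<open>g : J \<rightarrow> {0..n-1}\<close>, consider the \<open>n\<close> functionals
  \<open>\<psi>\<^sub>t(x) = \<Sum>\<^sub>j\<^sub>\<in>\<^sub>J \<omega>\<^bsup>g(j) t\<^esup> x\<^sub>j\<close> with \<open>\<omega> = e\<^bsup>2\<pi>i/n\<^esup>\<close>. Each has norm \<open>|J|\<close>, while by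
  orthogonality of the characters \<open>\<Sum>\<^sub>t |\<psi>\<^sub>t(x)|\<^sup>2 = n \<Sum>\<^sub>j\<^sub>\<in>\<^sub>J |x\<^sub>j|\<^sup>2 \<le> n |J|\<close>, so by AM-GM their product
  has norm at most \<open>|J|\<^bsup>n/2\<^esup>\<close>; hence \<open>c\<^sub>n \<ge> |J|\<^bsup>n/2\<^esup>\<close>. Taking \<open>|J| = d\<close> if \<open>d \<le> n\<close> and \<open>|J| = 1\<close>
  otherwise gives the bound, using \<open>d\<^sup>n \<le> (3n)\<^sup>d\<close> for \<open>n \<le> d\<close>.

  Since \<open>c\<^sub>n\<close> is an infimum, one also needs some admissible constant. Writing
  \<open>\<psi>\<^sub>i(x) = \<Sum>\<^sub>j a\<^sub>i\<^sub>j x\<^sub>j\<close>, on the grid \<open>{0, 1/n, \<dots>, 1}\<^sup>d\<close> every line in the direction of a largest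
  coefficient of \<open>\<psi>\<^sub>i\<close> contains at most one point where \<open>|\<psi>\<^sub>i| < max\<^sub>j |a\<^sub>i\<^sub>j| / 2n\<close>. These bad
  points form at most a fraction \<open>1/(n+1)\<close> of the grid for each \<open>i\<close>, so some grid point is good
  for all \<open>n\<close> functionals at once, which gives \<open>c\<^sub>n \<le> (2nd)\<^sup>n\<close>.\<close>

lemma norm_le_supnorm: "cmod (x i) \<le> supnorm x"
  unfolding supnorm_def by (rule Max_ge) auto

lemma supnorm_attained: "\<exists>i. cmod (x i) = supnorm x"
proof -
  have "supnorm x \<in> range (\<lambda>i. cmod (x i))"
    unfolding supnorm_def by (rule Max_in) auto
  then show ?thesis by auto
qed

lemma supnorm_eqI:
  assumes "\<And>i. cmod (x i) \<le> s" "cmod (x j) = s"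
  shows "supnorm x = s"
proof -
  obtain i where "cmod (x i) = supnorm x" using supnorm_attained by blast
  then show ?thesis using norm_le_supnorm[of x j] assms(1)[of i] assms(2) by linarith
qed

lemma supnorm_const_one: "supnorm (\<lambda>_::'d::finite. 1::complex) = 1"
  by (rule supnorm_eqI) auto

lemma supnorm_le_iff: "supnorm x \<le> s \<longleftrightarrow> (\<forall>i. cmod (x i) \<le> s)"
proof
  show "supnorm x \<le> s \<Longrightarrow> \<forall>i. cmod (x i) \<le> s"
    using norm_le_supnorm order_trans by blast
  show "\<forall>i. cmod (x i) \<le> s \<Longrightarrow> supnorm x \<le> s"
    using supnorm_attained[of x] by metis
qed

lemma norm_le_polynorm:
  assumes "\<And>x. supnorm x = 1 \<Longrightarrow> cmod (P x) \<le> B" "supnorm y = 1"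
  shows "cmod (P y) \<le> polynorm P"
  unfolding polynorm_def
proof (rule cSup_upper)
  show "bdd_above {cmod (P x) | x. supnorm x = 1}"
    by (rule bdd_aboveI[where M=B]) (use assms(1) in blast)
qed (use assms(2) in blast)

lemma polynorm_le:
  fixes P :: "('d::finite \<Rightarrow> complex) \<Rightarrow> complex"
  assumes "\<And>x. supnorm x = 1 \<Longrightarrow> cmod (P x) \<le> B"
  shows "polynorm P \<le> B"
  unfolding polynorm_def
proof (rule cSup_least)
  show "{cmod (P x) |x. supnorm x = (1::real)} \<noteq> {}"
    using supnorm_const_one by blast
qed (use assms in auto)

lemma polynorm_nonneg:
  fixes P :: "('d::finite \<Rightarrow> complex) \<Rightarrow> complex"
  assumes "\<And>x. supnorm x = 1 \<Longrightarrow> cmod (P x) \<le> B"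
  shows "0 \<le> polynorm P"
  by (rule order_trans[OF norm_ge_zero norm_le_polynorm[OF assms supnorm_const_one]])

lemma clinear_functional_add: "clinear_functional \<psi> \<Longrightarrow> \<psi> (\<lambda>i. x i + y i) = \<psi> x + \<psi> y"
  unfolding clinear_functional_def by blast

lemma clinear_functional_scale: "clinear_functional \<psi> \<Longrightarrow> \<psi> (\<lambda>i. c * x i) = c * \<psi> x"
  unfolding clinear_functional_def by blast

lemma clinear_functional_sum:
  assumes "clinear_functional \<psi>" "finite F"
  shows "\<psi> (\<lambda>i. \<Sum>j\<in>F. f j i) = (\<Sum>j\<in>F. \<psi> (f j))"
  using assms(2)
proof (induction F rule: finite_induct)
  case empty
  show ?case
    using clinear_functional_scale[OF assms(1), of 0 "\<lambda>_. 0"] by simp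
next
  case (insert a F)
  then show ?case
    using clinear_functional_add[OF assms(1), of "f a" "\<lambda>i. \<Sum>j\<in>F. f j i"] by simp
qed

lemma clinear_functional_eq_sum:
  assumes "clinear_functional \<psi>"
  shows "\<psi> x = (\<Sum>j\<in>UNIV. x j * \<psi> (\<lambda>i. if i = j then 1 else 0))"
proof -
  have "(\<Sum>j\<in>UNIV. x j * (if i = j then 1 else 0)) = (\<Sum>j\<in>UNIV. if i = j then x j else 0)" for i
    by (rule sum.cong) auto
  then have "x = (\<lambda>i. \<Sum>j\<in>UNIV. x j * (if i = j then 1 else 0))"
    by auto
  then have "\<psi> x = \<psi> (\<lambda>i. \<Sum>j\<in>UNIV. x j * (if i = j then 1 else 0))"
    by simp
  also have "\<dots> = (\<Sum>j\<in>UNIV. \<psi> (\<lambda>i. x j * (if i = j then 1 else 0)))"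
    by (rule clinear_functional_sum[OF assms]) simp
  also have "\<dots> = (\<Sum>j\<in>UNIV. x j * \<psi> (\<lambda>i. if i = j then 1 else 0))"
    using clinear_functional_scale[OF assms] by simp
  finally show ?thesis .
qed

definition cn_admissible :: "'d::finite itself \<Rightarrow> nat \<Rightarrow> real \<Rightarrow> bool" where
  "cn_admissible _ n C \<longleftrightarrow> (\<forall>\<psi> :: nat \<Rightarrow> ('d \<Rightarrow> complex) \<Rightarrow> complex.
     (\<forall>i<n. clinear_functional (\<psi> i)) \<longrightarrow>
     (\<Prod>i<n. polynorm (\<psi> i)) \<le> C * polynorm (\<lambda>x. \<Prod>i<n. \<psi> i x))"

lemma cn_linf_eq_Inf: "cn_linf TYPE('d::finite) n = Inf {C. cn_admissible TYPE('d) n C}"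
  unfolding cn_linf_def cn_admissible_def ..

subsection \<open>The lower bound\<close>

lemma sum_cis_orthogonal:
  fixes a b n :: nat
  assumes "a < n" "b < n"
  shows "(\<Sum>t<n. cis (2*pi*a*t/n) * cnj (cis (2*pi*b*t/n))) = (if a = b then of_nat n else 0)"
proof (cases "a = b")
  case True
  then show ?thesis by (simp add: cis_cnj cis_mult)
next
  case False
  define z where "z = cis (2*pi*(real a - real b)/n)"
  have n: "n > 0" using assms by auto
  have terms: "cis (2*pi*a*t/n) * cnj (cis (2*pi*b*t/n)) = z ^ t" for t
    unfolding z_def Complex.DeMoivre by (simp add: cis_cnj cis_mult algebra_simps diff_divide_distrib)
  have "z ^ n = cis (2 * pi * real_of_int (int a - int b))"
    unfolding z_def Complex.DeMoivre using n by simp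
  then have zn: "z ^ n = 1" by simp
  have "z \<noteq> 1"
  proof
    assume "z = 1"
    then obtain k :: int where "2*pi*(real a - real b)/n = k * 2 * pi"
      unfolding z_def complex_eq_iff by (auto simp: cos_one_2pi_int)
    then have "2*pi*(real a - real b) = 2*pi*(of_int k * real n)"
      using n by (simp add: field_simps)
    then have "real a - real b = of_int k * real n"
      by simp
    then have "int a - int b = k * int n"
      by (metis of_int_eq_iff of_int_mult of_int_of_nat_eq of_int_diff)
    then have "int n dvd int a - int b" by simp
    moreover have "\<bar>int a - int b\<bar> < int n" using assms by auto
    ultimately show False
      using False dvd_imp_le_int[of "int a - int b" "int n"] by auto
  qed
  then show ?thesis using False zn by (simp add: terms sum_gp_strict)
qed

definition fourier_functional ::
    "'d set \<Rightarrow> ('d \<Rightarrow> nat) \<Rightarrow> nat \<Rightarrow> nat \<Rightarrow> ('d::finite \<Rightarrow> complex) \<Rightarrow> complex" where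
  "fourier_functional J g n t x = (\<Sum>j\<in>J. cis (2*pi*g j*t/n) * x j)"

lemma clinear_functional_fourier_functional: "clinear_functional (fourier_functional J g n t)"
  unfolding clinear_functional_def fourier_functional_def
  by (simp add: algebra_simps sum.distrib sum_distrib_left)

lemma norm_fourier_functional_le:
  assumes "supnorm x = 1"
  shows "cmod (fourier_functional J g n t x) \<le> card J"
proof -
  have "cmod (fourier_functional J g n t x) \<le> (\<Sum>j\<in>J. cmod (x j))"
    unfolding fourier_functional_def by (rule order_trans[OF norm_sum]) (simp add: norm_mult)
  also have "\<dots> \<le> (\<Sum>j\<in>J. 1)"
    by (rule sum_mono) (metis assms norm_le_supnorm)
  finally show ?thesis by simp
qed

lemma polynorm_fourier_functional: "polynorm (fourier_functional J g n t) = card J"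
proof (rule order_antisym)
  show "polynorm (fourier_functional J g n t) \<le> card J"
    by (rule polynorm_le) (rule norm_fourier_functional_le)
  define x where "x j = cnj (cis (2*pi*g j*t/n))" for j
  have unit: "supnorm x = 1"
    by (rule supnorm_eqI[where j=undefined]) (simp_all add: x_def)
  have "fourier_functional J g n t x = card J"
    unfolding fourier_functional_def x_def by (simp add: cis_cnj cis_mult)
  then have "real (card J) = cmod (fourier_functional J g n t x)" by simp
  also have "\<dots> \<le> polynorm (fourier_functional J g n t)"
    by (rule norm_le_polynorm[OF norm_fourier_functional_le unit])
  finally show "real (card J) \<le> polynorm (fourier_functional J g n t)" .
qed

lemma sum_norm_fourier_functional_squared:
  assumes inj: "inj_on g J" and range: "g ` J \<subseteq> {..<n}"
  shows "(\<Sum>t<n. (cmod (fourier_functional J g n t x))\<^sup>2) = n * (\<Sum>j\<in>J. (cmod (x j))\<^sup>2)"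
proof -
  define e where "e j t = cis (2*pi*g j*t/n)" for j t
  have "complex_of_real (\<Sum>t<n. (cmod (fourier_functional J g n t x))\<^sup>2)
      = (\<Sum>t<n. fourier_functional J g n t x * cnj (fourier_functional J g n t x))"
    unfolding of_real_sum by (intro sum.cong refl) (rule complex_norm_square)
  also have "\<dots> = (\<Sum>t<n. \<Sum>j\<in>J. \<Sum>l\<in>J. (x j * cnj (x l)) * (e j t * cnj (e l t)))"
    unfolding fourier_functional_def e_def by (simp add: sum_product algebra_simps)
  also have "\<dots> = (\<Sum>j\<in>J. \<Sum>l\<in>J. (x j * cnj (x l)) * (\<Sum>t<n. e j t * cnj (e l t)))"
    by (simp add: sum.swap[of _ "{..<n}"] sum_distrib_left)
  also have "\<dots> = (\<Sum>j\<in>J. \<Sum>l\<in>J. (x j * cnj (x l)) * (if j = l then of_nat n else 0))"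
  proof (intro sum.cong refl)
    fix j l assume "j \<in> J" "l \<in> J"
    then have "(\<Sum>t<n. e j t * cnj (e l t)) = (if g j = g l then of_nat n else 0)"
      unfolding e_def using range by (intro sum_cis_orthogonal) auto
    also have "\<dots> = (if j = l then of_nat n else 0)"
      using inj \<open>j \<in> J\<close> \<open>l \<in> J\<close> by (auto dest: inj_onD)
    finally show "x j * cnj (x l) * (\<Sum>t<n. e j t * cnj (e l t))
        = x j * cnj (x l) * (if j = l then of_nat n else 0)" by simp
  qed
  also have "\<dots> = (\<Sum>j\<in>J. of_nat n * (x j * cnj (x j)))"
    by (simp add: if_distrib mult.commute cong: if_cong)
  also have "\<dots> = complex_of_real (n * (\<Sum>j\<in>J. (cmod (x j))\<^sup>2))"
    unfolding of_real_mult of_real_sum sum_distrib_left complex_norm_square by simp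
  finally show ?thesis using of_real_eq_iff by blast
qed

lemma prod_le_mean_power:
  fixes u :: "'a \<Rightarrow> real"
  assumes "finite S" "S \<noteq> {}" "\<And>i. i \<in> S \<Longrightarrow> 0 \<le> u i"
  shows "(\<Prod>i\<in>S. u i) \<le> ((\<Sum>i\<in>S. u i) / card S) ^ card S"
proof -
  define P where "P = (\<Prod>i\<in>S. u i)"
  have k: "card S > 0" using assms by (simp add: card_gt_0_iff)
  have "0 \<le> P"
    unfolding P_def using assms(3) by (simp add: prod_nonneg)
  then have "P = (P powr (1 / card S)) ^ card S"
    using k by (cases "P = 0") (simp_all add: powr_power)
  also have "\<dots> \<le> ((\<Sum>i\<in>S. u i) / card S) ^ card S"
    using arith_geom_mean[OF assms] unfolding P_def
    by (intro power_mono) (simp_all add: sum_divide_distrib)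
  finally show ?thesis unfolding P_def .
qed

lemma norm_prod_fourier_functional_le:
  assumes "n \<ge> 1" and inj: "inj_on g J" and range: "g ` J \<subseteq> {..<n}" and x: "supnorm x = 1"
  shows "cmod (\<Prod>t<n. fourier_functional J g n t x) \<le> sqrt (card J) ^ n"
proof -
  define u where "u t = (cmod (fourier_functional J g n t x))\<^sup>2" for t
  have "(\<Sum>t<n. u t) / n = (\<Sum>j\<in>J. (cmod (x j))\<^sup>2)"
    unfolding u_def sum_norm_fourier_functional_squared[OF inj range] using assms(1) by simp
  also have "\<dots> \<le> (\<Sum>j\<in>J. 1)"
    by (intro sum_mono) (use x norm_le_supnorm[of x] in \<open>simp add: power_le_one\<close>)
  finally have mean_le: "(\<Sum>t<n. u t) / n \<le> card J" by simp
  have "0 \<in> {..<n}" using assms(1) by simp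
  then have "{..<n} \<noteq> {}" by blast
  then have "(cmod (\<Prod>t<n. fourier_functional J g n t x))\<^sup>2 \<le> ((\<Sum>t<n. u t) / n) ^ n"
    using prod_le_mean_power[of "{..<n}" u]
    by (simp add: u_def prod_norm[symmetric] power_mult_distrib prod_power_distrib)
  also have "\<dots> \<le> real (card J) ^ n"
    using mean_le by (intro power_mono) (simp_all add: u_def sum_nonneg)
  finally have "cmod (\<Prod>t<n. fourier_functional J g n t x) \<le> sqrt (real (card J) ^ n)"
    by (intro real_le_rsqrt)
  then show ?thesis by (simp add: real_sqrt_power)
qed

lemma cn_admissible_ge_sqrt_card:
  fixes J :: "'d::finite set"
  assumes "n \<ge> 1" "J \<noteq> {}" "inj_on g J" "g ` J \<subseteq> {..<n}"
    and "cn_admissible TYPE('d) n C"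
  shows "sqrt (card J) ^ n \<le> C"
proof -
  define s where "s = sqrt (card J) ^ n"
  define p where "p = polynorm (\<lambda>x. \<Prod>t<n. fourier_functional J g n t x)"
  have "s\<^sup>2 = (sqrt (card J) ^ 2) ^ n"
    unfolding s_def by (simp only: power_mult[symmetric] mult.commute)
  also have "\<dots> = real (card J) ^ n" by simp
  also have "\<dots> \<le> C * p"
    using assms(5)[unfolded cn_admissible_def, rule_format, of "fourier_functional J g n"]
    unfolding p_def by (simp add: clinear_functional_fourier_functional polynorm_fourier_functional)
  finally have le: "s\<^sup>2 \<le> C * p" .
  have bound: "\<And>x. supnorm x = 1 \<Longrightarrow> cmod (\<Prod>t<n. fourier_functional J g n t x) \<le> s"
    unfolding s_def by (rule norm_prod_fourier_functional_le[OF assms(1,3,4)])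
  have "0 \<le> p"
    unfolding p_def by (rule polynorm_nonneg[OF bound])
  have "p \<le> s"
    unfolding p_def by (rule polynorm_le[OF bound])
  have "1 \<le> s"
    using assms(2) unfolding s_def by (simp add: Suc_leI card_gt_0_iff one_le_power)
  then have "0 < C * p"
    using le one_le_power[of s 2] by linarith
  then have "0 \<le> C"
    using \<open>0 \<le> p\<close> by (simp add: zero_less_mult_iff)
  then have "C * p \<le> C * s"
    using \<open>p \<le> s\<close> by (intro mult_left_mono)
  then have "s * s \<le> C * s"
    using le by (simp add: power2_eq_square)
  then show ?thesis
    using \<open>1 \<le> s\<close> unfolding s_def[symmetric] by simp
qed

lemma power_le_power_swap:
  fixes n d :: nat
  assumes "1 \<le> n" "n \<le> d"
  shows "real d ^ n \<le> (3 * real n) ^ d"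
proof -
  have n: "real n > 0" using assms by simp
  have "(real d / n) ^ n \<le> exp (real d / n - 1) ^ n"
    using exp_ge_add_one_self[of "real d / n - 1"] by (intro power_mono) simp_all
  also have "\<dots> = exp (real d - n)"
    using n by (simp add: exp_of_nat_mult[symmetric] algebra_simps)
  also have "\<dots> \<le> exp (real d)"
    by simp
  also have "\<dots> = exp 1 ^ d"
    by (simp add: exp_of_nat_mult[symmetric])
  also have "\<dots> \<le> 3 ^ d"
    by (rule power_mono[OF exp_le]) simp
  finally have "(real d / n) ^ n \<le> 3 ^ d" .
  moreover have "real n ^ n \<le> real n ^ d"
    using assms by (intro power_increasing) auto
  ultimately have "(real d / n) ^ n * real n ^ n \<le> 3 ^ d * real n ^ d"
    by (intro mult_mono) auto
  then show ?thesis
    using n by (simp add: power_divide power_mult_distrib)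
qed

lemma cn_admissible_ge:
  assumes "n \<ge> 1" "cn_admissible TYPE('d::finite) n C"
  shows "1/2 * sqrt (real CARD('d) ^ n / (24 * real n) ^ CARD('d)) \<le> C"
proof -
  define d where "d = CARD('d)"
  define r where "r = real d ^ n / (24 * real n) ^ d"
  have denom: "1 \<le> (24 * real n) ^ d"
    using assms(1) by (intro one_le_power) simp
  have "sqrt r \<le> C"
  proof (cases "d \<le> n")
    case True
    obtain h :: "'d \<Rightarrow> nat" where "bij_betw h UNIV {0..<d}"
      using ex_bij_betw_finite_nat[of "UNIV :: 'd set"] unfolding d_def by auto
    then have "inj h" "range h \<subseteq> {..<n}"
      using True by (auto simp: bij_betw_def)
    then have "sqrt d ^ n \<le> C"
      using cn_admissible_ge_sqrt_card[OF assms(1) _ _ _ assms(2), of UNIV h] unfolding d_def by simp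
    moreover have "r \<le> real d ^ n / 1"
      unfolding r_def using denom by (intro divide_left_mono) simp_all
    then have "sqrt r \<le> sqrt d ^ n"
      by (simp add: real_sqrt_power[symmetric])
    ultimately show ?thesis by linarith
  next
    case False
    have "1 \<le> C"
      using cn_admissible_ge_sqrt_card[OF assms(1), of "{undefined}" "\<lambda>_. 0"] assms by simp
    moreover have "(3 * real n) ^ d \<le> (24 * real n) ^ d"
      by (intro power_mono) simp_all
    then have "real d ^ n \<le> (24 * real n) ^ d"
      using power_le_power_swap[of n d] False assms(1) by linarith
    then have "sqrt r \<le> 1"
      unfolding r_def using denom by simp
    ultimately show ?thesis by linarith
  qed
  moreover have "0 \<le> sqrt r"
    unfolding r_def by simp
  ultimately show ?thesis
    unfolding r_def d_def by linarith
qed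

subsection \<open>An admissible constant exists\<close>

definition grid_values :: "nat \<Rightarrow> complex set" where
  "grid_values n = (\<lambda>k. complex_of_real (real k / real n)) ` {..n}"

definition grid :: "nat \<Rightarrow> ('d::finite \<Rightarrow> complex) set" where
  "grid n = (\<Pi>\<^sub>E j\<in>UNIV. grid_values n)"

lemma finite_grid_values: "finite (grid_values n)"
  unfolding grid_values_def by simp

lemma card_grid_values: "n \<ge> 1 \<Longrightarrow> card (grid_values n) = n + 1"
  unfolding grid_values_def by (subst card_image) (auto simp: inj_on_def)

lemma norm_grid_values_le: "v \<in> grid_values n \<Longrightarrow> cmod v \<le> 1"
  unfolding grid_values_def by (auto simp: norm_divide divide_le_eq_1)

lemma grid_values_separated:
  assumes "u \<in> grid_values n" "v \<in> grid_values n" "u \<noteq> v"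
  shows "1 / n \<le> cmod (u - v)"
proof -
  obtain k l :: nat where kl: "u = of_real (k / n)" "v = of_real (l / n)"
    using assms(1,2) unfolding grid_values_def by auto
  then have "1 \<le> \<bar>real k - real l\<bar>"
    using assms(3) by auto
  moreover have "u - v = of_real ((real k - real l) / n)"
    unfolding kl by (simp add: diff_divide_distrib)
  then have "cmod (u - v) = \<bar>real k - real l\<bar> / n"
    by (simp only: norm_of_real abs_divide abs_of_nat)
  ultimately show ?thesis
    by (simp add: divide_right_mono)
qed

lemma supnorm_grid_le: "x \<in> grid n \<Longrightarrow> supnorm x \<le> 1"
  unfolding grid_def supnorm_le_iff using norm_grid_values_le by (auto simp: PiE_iff)

lemma card_grid: "n \<ge> 1 \<Longrightarrow> card (grid n :: ('d::finite \<Rightarrow> complex) set) = (n + 1) ^ CARD('d)"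
  unfolding grid_def by (simp add: card_PiE card_grid_values)

text \<open>If \<open>|a\<^sub>m|\<close> is maximal, two grid points differing only in coordinate \<open>m\<close> give values of
  \<open>\<Sum>\<^sub>j x\<^sub>j a\<^sub>j\<close> at distance \<open>\<ge> |a\<^sub>m|/n\<close>; so forgetting coordinate \<open>m\<close> is injective on the small points.\<close>

lemma card_small_values_on_grid:
  fixes a :: "'d::finite \<Rightarrow> complex"
  assumes "n \<ge> 1"
  shows "card {x \<in> grid n. cmod (\<Sum>j\<in>UNIV. x j * a j) < supnorm a / (2 * real n)} * (n + 1)
    \<le> card (grid n :: ('d \<Rightarrow> complex) set)"
proof -
  obtain m where m: "cmod (a m) = supnorm a" using supnorm_attained by blast
  define small where "small = {x \<in> grid n. cmod (\<Sum>j\<in>UNIV. x j * a j) < supnorm a / (2 * real n)}"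
  define H :: "('d \<Rightarrow> complex) set" where
    "H = (\<Pi>\<^sub>E j\<in>UNIV. if j = m then {0} else grid_values n)"
  have "inj_on (\<lambda>x. x(m := 0)) small"
  proof (rule inj_onI, rule ccontr)
    fix x y assume x: "x \<in> small" and y: "y \<in> small" and eq: "x(m := 0) = y(m := 0)" and "x \<noteq> y"
    then have ne: "x m \<noteq> y m" by (metis fun_upd_triv fun_upd_upd)
    have "(\<Sum>j\<in>UNIV. x j * a j) - (\<Sum>j\<in>UNIV. y j * a j) = (\<Sum>j\<in>UNIV. (x j - y j) * a j)"
      by (simp add: sum_subtractf algebra_simps)
    also have "\<dots> = (\<Sum>j\<in>UNIV. if j = m then (x m - y m) * a m else 0)"
    proof (intro sum.cong refl)
      fix j
      show "(x j - y j) * a j = (if j = m then (x m - y m) * a m else 0)"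
        using fun_cong[OF eq, of j] by (cases "j = m") simp_all
    qed
    finally have diff: "(\<Sum>j\<in>UNIV. x j * a j) - (\<Sum>j\<in>UNIV. y j * a j) = (x m - y m) * a m"
      by simp
    have "x m \<in> grid_values n" "y m \<in> grid_values n"
      using x y unfolding small_def grid_def by auto
    then have "1 / n \<le> cmod (x m - y m)"
      using grid_values_separated ne by blast
    then have "supnorm a / n \<le> cmod (x m - y m) * supnorm a"
      using mult_right_mono[of "1 / n" "cmod (x m - y m)" "supnorm a"] m norm_ge_zero[of "a m"]
      by simp
    also have "\<dots> = cmod ((\<Sum>j\<in>UNIV. x j * a j) - (\<Sum>j\<in>UNIV. y j * a j))"
      unfolding diff norm_mult m ..
    also have "\<dots> \<le> cmod (\<Sum>j\<in>UNIV. x j * a j) + cmod (\<Sum>j\<in>UNIV. y j * a j)"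
      by (rule norm_triangle_ineq4)
    also have "\<dots> < supnorm a / n"
      using x y unfolding small_def by simp
    finally show False by simp
  qed
  moreover have "(\<lambda>x. x(m := 0)) ` small \<subseteq> H"
    unfolding small_def grid_def H_def by (auto simp: PiE_iff)
  moreover have "finite H"
    unfolding H_def by (simp add: finite_PiE finite_grid_values)
  ultimately have "card small \<le> card H"
    by (rule card_inj_on_le)
  moreover have "card (grid n :: ('d \<Rightarrow> complex) set) = card H * (n + 1)"
  proof -
    have "card H = (\<Prod>j\<in>UNIV. card (if j = m then {0} else grid_values n))"
      unfolding H_def by (simp add: card_PiE)
    also have "\<dots> = (\<Prod>j\<in>UNIV - {m}. card (if j = m then {0} else grid_values n))"
      by (simp add: prod.remove[of UNIV m])
    also have "\<dots> = (\<Prod>j\<in>UNIV - {m}. n + 1)"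
      using assms by (intro prod.cong) (auto simp: card_grid_values)
    also have "\<dots> = (n + 1) ^ (CARD('d) - 1)"
      by simp
    finally show ?thesis
      using card_grid[OF assms, where 'd='d] power_minus_mult[of "CARD('d)" "n + 1"] by simp
  qed
  ultimately show ?thesis
    unfolding small_def[symmetric] by (metis mult_le_mono1)
qed

lemma exists_grid_point_large_values:
  fixes a :: "nat \<Rightarrow> 'd::finite \<Rightarrow> complex"
  assumes "n \<ge> 1"
  shows "\<exists>x\<in>grid n. \<forall>i<n. supnorm (a i) / (2 * real n) \<le> cmod (\<Sum>j\<in>UNIV. x j * a i j)"
proof -
  define small where
    "small i = {x \<in> grid n. cmod (\<Sum>j\<in>UNIV. x j * a i j) < supnorm (a i) / (2 * real n)}" for i
  have "card (\<Union>i<n. small i) * (n + 1) \<le> (\<Sum>i<n. card (small i)) * (n + 1)"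
    by (intro mult_right_mono card_UN_le) simp_all
  also have "\<dots> \<le> (\<Sum>i<n. card (grid n :: ('d \<Rightarrow> complex) set))"
    unfolding sum_distrib_right small_def
    by (intro sum_mono card_small_values_on_grid[OF assms])
  also have "\<dots> < card (grid n :: ('d \<Rightarrow> complex) set) * (n + 1)"
    using card_grid[OF assms, where 'd='d] by simp
  finally have less: "card (\<Union>i<n. small i) < card (grid n :: ('d \<Rightarrow> complex) set)"
    by (rule mult_less_cancel2[THEN iffD1, THEN conjunct2])
  have "(\<Union>i<n. small i) \<subseteq> grid n"
    unfolding small_def by auto
  moreover have "(\<Union>i<n. small i) \<noteq> grid n"
    using less by auto
  ultimately obtain x where "x \<in> grid n" "\<And>i. i < n \<Longrightarrow> x \<notin> small i"
    by blast
  then show ?thesis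
    unfolding small_def by (auto simp: not_less)
qed

lemma exists_unit_vector_dominating:
  fixes x :: "'d::finite \<Rightarrow> complex"
  assumes "supnorm x \<le> 1"
  shows "\<exists>y. supnorm y = 1 \<and> (\<forall>a. cmod (\<Sum>j\<in>UNIV. x j * a j) \<le> cmod (\<Sum>j\<in>UNIV. y j * a j))"
proof (cases "supnorm x = 0")
  case True
  then have "x = (\<lambda>_. 0)"
    using norm_le_supnorm[of x] by (auto intro!: ext)
  then show ?thesis
    using supnorm_const_one by auto
next
  case False
  define s where "s = supnorm x"
  have "0 \<le> s"
    using norm_le_supnorm[of x] norm_ge_zero order_trans unfolding s_def by blast
  then have s: "0 < s" "s \<le> 1"
    using False assms unfolding s_def by simp_all
  obtain j0 where j0: "cmod (x j0) = s"
    using supnorm_attained unfolding s_def by blast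
  define y where "y j = x j / of_real s" for j
  have "supnorm y = 1"
    by (rule supnorm_eqI[where j=j0])
      (use s j0 norm_le_supnorm[of x] in \<open>simp_all add: y_def norm_divide s_def[symmetric]\<close>)
  moreover have "cmod (\<Sum>j\<in>UNIV. x j * a j) \<le> cmod (\<Sum>j\<in>UNIV. y j * a j)" for a
  proof -
    have "(\<Sum>j\<in>UNIV. y j * a j) = (\<Sum>j\<in>UNIV. x j * a j) / of_real s"
      unfolding y_def by (simp add: sum_divide_distrib)
    then show ?thesis
      using s by (simp add: norm_divide le_divide_eq mult_left_le)
  qed
  ultimately show ?thesis by blast
qed

lemma norm_sum_mult_le:
  fixes x a :: "'d::finite \<Rightarrow> complex"
  shows "cmod (\<Sum>j\<in>UNIV. x j * a j) \<le> CARD('d) * (supnorm x * supnorm a)"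
proof -
  have "cmod (\<Sum>j\<in>UNIV. x j * a j) \<le> (\<Sum>j\<in>UNIV. cmod (x j) * cmod (a j))"
    by (rule order_trans[OF norm_sum]) (simp add: norm_mult)
  also have "\<dots> \<le> (\<Sum>j\<in>(UNIV::'d set). supnorm x * supnorm a)"
    by (intro sum_mono mult_mono norm_le_supnorm) (simp_all add: order_trans[OF norm_ge_zero norm_le_supnorm])
  finally show ?thesis by simp
qed

lemma exists_unit_vector_large_values:
  fixes a :: "nat \<Rightarrow> 'd::finite \<Rightarrow> complex"
  assumes "n \<ge> 1"
  shows "\<exists>y. supnorm y = 1 \<and> (\<forall>i<n. supnorm (a i) \<le> 2 * real n * cmod (\<Sum>j\<in>UNIV. y j * a i j))"
proof -
  obtain x where "x \<in> grid n" and x: "\<forall>i<n. supnorm (a i) / (2 * real n) \<le> cmod (\<Sum>j\<in>UNIV. x j * a i j)"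
    using exists_grid_point_large_values[OF assms] by blast
  then obtain y where y: "supnorm y = 1"
    and dom: "\<forall>b. cmod (\<Sum>j\<in>UNIV. x j * b j) \<le> cmod (\<Sum>j\<in>UNIV. y j * b j)"
    using exists_unit_vector_dominating supnorm_grid_le by blast
  have "supnorm (a i) \<le> 2 * real n * cmod (\<Sum>j\<in>UNIV. y j * a i j)" if "i < n" for i
  proof -
    have "supnorm (a i) / (2 * real n) \<le> cmod (\<Sum>j\<in>UNIV. y j * a i j)"
      using x dom that order_trans by blast
    then show ?thesis
      using assms by (simp add: field_simps)
  qed
  then show ?thesis using y by blast
qed

lemma cn_admissible_exists:
  assumes "n \<ge> 1"
  shows "cn_admissible TYPE('d::finite) n ((2 * real n * real CARD('d)) ^ n)"
  unfolding cn_admissible_def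
proof (intro allI impI)
  fix \<psi> :: "nat \<Rightarrow> ('d \<Rightarrow> complex) \<Rightarrow> complex"
  assume lin: "\<forall>i<n. clinear_functional (\<psi> i)"
  define D where "D = real CARD('d)"
  define a where "a i j = \<psi> i (\<lambda>k. if k = j then 1 else 0)" for i j
  have \<psi>: "\<psi> i x = (\<Sum>j\<in>UNIV. x j * a i j)" if "i < n" for i x
    unfolding a_def using clinear_functional_eq_sum lin that by blast
  obtain y where y: "supnorm y = 1"
    and large: "\<forall>i<n. supnorm (a i) \<le> 2 * real n * cmod (\<Sum>j\<in>UNIV. y j * a i j)"
    using exists_unit_vector_large_values[OF assms] by blast
  have bound: "cmod (\<psi> i z) \<le> D * supnorm (a i)" if "i < n" "supnorm z = 1" for i z
    using norm_sum_mult_le[of z "a i"] \<psi> that unfolding D_def by simp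
  have "(\<Prod>i<n. polynorm (\<psi> i)) \<le> (\<Prod>i<n. 2 * real n * D * cmod (\<psi> i y))"
  proof (intro prod_mono conjI)
    fix i assume "i \<in> {..<n}"
    then show "0 \<le> polynorm (\<psi> i)"
      using polynorm_nonneg bound by blast
    have "polynorm (\<psi> i) \<le> D * supnorm (a i)"
      using polynorm_le bound \<open>i \<in> {..<n}\<close> by blast
    also have "\<dots> \<le> D * (2 * real n * cmod (\<psi> i y))"
      using large \<psi> \<open>i \<in> {..<n}\<close> by (intro mult_left_mono) (simp_all add: D_def)
    also have "\<dots> = 2 * real n * D * cmod (\<psi> i y)"
      by simp
    finally show "polynorm (\<psi> i) \<le> 2 * real n * D * cmod (\<psi> i y)" .
  qed
  also have "\<dots> = (2 * real n * D) ^ n * cmod (\<Prod>i<n. \<psi> i y)"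
    by (simp add: prod.distrib prod_norm)
  also have "\<dots> \<le> (2 * real n * D) ^ n * polynorm (\<lambda>z. \<Prod>i<n. \<psi> i z)"
  proof (intro mult_left_mono norm_le_polynorm[OF _ y])
    fix z :: "'d \<Rightarrow> complex"
    assume "supnorm z = 1"
    have "cmod (\<Prod>i<n. \<psi> i z) = (\<Prod>i<n. cmod (\<psi> i z))"
      by (simp add: prod_norm)
    also have "\<dots> \<le> (\<Prod>i<n. D * supnorm (a i))"
      using bound \<open>supnorm z = 1\<close> by (intro prod_mono conjI) simp_all
    finally show "cmod (\<Prod>i<n. \<psi> i z) \<le> (\<Prod>i<n. D * supnorm (a i))" .
  qed (simp add: D_def)
  finally show "(\<Prod>i<n. polynorm (\<psi> i)) \<le> (2 * real n * real CARD('d)) ^ n * polynorm (\<lambda>z. \<Prod>i<n. \<psi> i z)"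
    unfolding D_def .
qed

theorem proposition3p1:
  fixes n :: nat
  assumes "n \<ge> 1"
  shows "cn_linf TYPE('d::finite) n \<ge>
           1/2 * sqrt (real CARD('d) ^ n / (24 * real n) ^ CARD('d))"
proof -
  have "{C. cn_admissible TYPE('d) n C} \<noteq> {}"
    using cn_admissible_exists[OF assms] by blast
  then show ?thesis
    unfolding cn_linf_eq_Inf by (rule cInf_greatest) (use cn_admissible_ge[OF assms] in blast)
qed

end
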